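(* Let $\mathcal R\subset\mathbb Z^k$ be a polyhedral region and let $n$ be a positive integer. Then $\mathcal R$ can be written as the union of a set of measure zero and a polyhedral region $\mathcal R'$ such that every $\vec z\in\mathcal R'$ lies in a $k$-dimensional box of size $n$ contained entirely in $\mathcal R$.
   Context: A half-space is $\{\vec z\in\mathbb Z^k:\vec v\cdot\vec z>m\}$ with $\vec v\in\mathbb Z^k$, $m\in\mathbb Z$; a polyhedral region is $\mathbb Z^k$ or an intersection of finitely many half-spaces. A hyperplane is $\{\vec z\in\mathbb Z^k:\vec v\cdot\vec z=m\}$ with $\vec v\in\mathbb Z^k\setminus\{0\}$, $m\in\mathbb Z$; a set of measure zero is a subset of $\mathbb Z^k$ covered by finitely many hyperplanes. A $k$-dimensional box of size $n$ is $\{\vec z\in\mathbb Z^k: c_i\le z_i\le c_i+n,\ i=1,\dots,k\}$ for some $c_i\in\mathbb Z$. *)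

theory Defs
  imports Main
begin

definition lattice :: "nat \<Rightarrow> int list set" where
  "lattice k = {z. length z = k}"

definition dotp :: "nat \<Rightarrow> int list \<Rightarrow> int list \<Rightarrow> int" where
  "dotp k v z = (\<Sum>i<k. v ! i * z ! i)"

definition halfspace :: "nat \<Rightarrow> int list \<Rightarrow> int \<Rightarrow> int list set" where
  "halfspace k v m = {z \<in> lattice k. dotp k v z > m}"

definition hyperplane :: "nat \<Rightarrow> int list \<Rightarrow> int \<Rightarrow> int list set" where
  "hyperplane k v m = {z \<in> lattice k. dotp k v z = m}"

definition polyhedral :: "nat \<Rightarrow> int list set \<Rightarrow> bool" where
  "polyhedral k R \<longleftrightarrow> R = lattice k \<or>
     (\<exists>H. H \<noteq> [] \<and> (\<forall>(v, m) \<in> set H. length v = k) \<and>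
          R = (\<Inter>(v, m) \<in> set H. halfspace k v m))"

definition measure_zero :: "nat \<Rightarrow> int list set \<Rightarrow> bool" where
  "measure_zero k S \<longleftrightarrow> S \<subseteq> lattice k \<and>
     (\<exists>H. (\<forall>(v, m) \<in> set H. length v = k \<and> v \<noteq> replicate k 0) \<and>
          S \<subseteq> (\<Union>(v, m) \<in> set H. hyperplane k v m))"

definition box :: "nat \<Rightarrow> nat \<Rightarrow> int list \<Rightarrow> int list set" where
  "box k n c = {z \<in> lattice k. \<forall>i<k. c ! i \<le> z ! i \<and> z ! i \<le> c ! i + int n}"

end

theory Submission
  imports Defs
begin

text \<open>Shrink every defining half-space \<open>v \<cdot> z > m\<close> to \<open>v \<cdot> z > m + n \<Sum>\<^sub>i |v\<^sub>i|\<close>.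
  Over a box of size \<open>n\<close> with corner \<open>z\<close> the form \<open>v \<cdot> w\<close> drops by at most
  \<open>n \<Sum>\<^sub>i |v\<^sub>i|\<close> below \<open>v \<cdot> z\<close>, so the box based at a point of the shrunken region
  lies in the original one. What is cut off is, for each constraint, a strip between
  two parallel hyperplanes, which is covered by finitely many integer level sets
  \<open>v \<cdot> z = t\<close>.\<close>

definition box_spread :: "nat \<Rightarrow> nat \<Rightarrow> int list \<Rightarrow> int" where
  "box_spread k n v = int n * (\<Sum>i<k. \<bar>v ! i\<bar>)"

lemma box_spread_nonneg: "box_spread k n v \<ge> 0"
  by (simp add: box_spread_def sum_nonneg)

lemma box_spread_replicate_0 [simp]: "box_spread k n (replicate k 0) = 0"
  by (simp add: box_spread_def)

lemma mult_add_ge_mult_minus_abs: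
  fixes v z d :: int
  assumes "0 \<le> d" "d \<le> b"
  shows "v * (z + d) \<ge> v * z - \<bar>v\<bar> * b"
proof (cases "v \<ge> 0")
  case True
  then have "v * d \<ge> 0" "\<bar>v\<bar> * b \<ge> 0" using assms by simp_all
  then show ?thesis by (simp add: algebra_simps)
next
  case False
  then have "v * d \<ge> v * b" using assms by (simp add: mult_left_mono_neg)
  then show ?thesis using False by (simp add: algebra_simps)
qed

lemma dotp_box_lower:
  assumes "w \<in> box k n c"
  shows "dotp k v w \<ge> dotp k v c - box_spread k n v"
proof -
  have "v ! i * w ! i \<ge> v ! i * c ! i - \<bar>v ! i\<bar> * int n" if "i < k" for i
    using mult_add_ge_mult_minus_abs[of "w ! i - c ! i" "int n" "v ! i" "c ! i"]
      assms that by (auto simp: box_def)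
  then have "(\<Sum>i<k. v ! i * c ! i - \<bar>v ! i\<bar> * int n) \<le> (\<Sum>i<k. v ! i * w ! i)"
    by (intro sum_mono) auto
  then show ?thesis
    by (simp add: dotp_def box_spread_def sum_subtractf sum_distrib_left sum_distrib_right
        mult.commute)
qed

lemma box_subset_halfspace:
  assumes "dotp k v c > m + box_spread k n v"
  shows "box k n c \<subseteq> halfspace k v m"
  using assms dotp_box_lower[of _ k n c v] by (force simp: halfspace_def box_def)

lemma halfspace_antimono: "m \<le> m' \<Longrightarrow> halfspace k v m' \<subseteq> halfspace k v m"
  by (auto simp: halfspace_def)

lemma measure_zero_empty [simp]: "measure_zero k {}"
  unfolding measure_zero_def by (intro conjI exI[of _ "[]"]) auto

lemma measure_zero_subset: "measure_zero k T \<Longrightarrow> S \<subseteq> T \<Longrightarrow> measure_zero k S"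
  unfolding measure_zero_def by blast

lemma measure_zero_Un:
  assumes "measure_zero k S" "measure_zero k T"
  shows "measure_zero k (S \<union> T)"
proof -
  obtain H where "\<forall>(v, m) \<in> set H. length v = k \<and> v \<noteq> replicate k 0"
    "S \<subseteq> (\<Union>(v, m) \<in> set H. hyperplane k v m)" "S \<subseteq> lattice k"
    using assms(1) by (auto simp: measure_zero_def)
  moreover obtain H' where "\<forall>(v, m) \<in> set H'. length v = k \<and> v \<noteq> replicate k 0"
    "T \<subseteq> (\<Union>(v, m) \<in> set H'. hyperplane k v m)" "T \<subseteq> lattice k"
    using assms(2) by (auto simp: measure_zero_def)
  ultimately show ?thesis
    unfolding measure_zero_def by (intro conjI exI[of _ "H @ H'"]) auto
qed

lemma measure_zero_UN_list:
  "(\<And>x. x \<in> set xs \<Longrightarrow> measure_zero k (A x)) \<Longrightarrow> measure_zero k (\<Union>x \<in> set xs. A x)"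
  by (induction xs) (auto intro: measure_zero_Un)

lemma measure_zero_halfspace_strip:
  assumes "length v = k"
  shows "measure_zero k (halfspace k v m - halfspace k v (m + box_spread k n v))"
proof (cases "v = replicate k 0")
  case True
  then show ?thesis by simp
next
  case False
  let ?H = "map (\<lambda>t. (v, t)) [m + 1..m + box_spread k n v]"
  have "halfspace k v m - halfspace k v (m + box_spread k n v)
          \<subseteq> (\<Union>(v, t) \<in> set ?H. hyperplane k v t)"
    by (force simp: halfspace_def hyperplane_def)
  then show ?thesis
    unfolding measure_zero_def using assms False
    by (intro conjI exI[of _ ?H]) (auto simp: halfspace_def)
qed

definition polyhedron :: "nat \<Rightarrow> (int list \<times> int) list \<Rightarrow> int list set" where
  "polyhedron k H = (\<Inter>(v, m) \<in> set H. halfspace k v m)"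

definition shrink_constraints :: "nat \<Rightarrow> nat \<Rightarrow> (int list \<times> int) list \<Rightarrow> (int list \<times> int) list"
  where "shrink_constraints k n H = map (\<lambda>(v, m). (v, m + box_spread k n v)) H"

lemma polyhedral_polyhedron:
  "H \<noteq> [] \<Longrightarrow> \<forall>(v, m) \<in> set H. length v = k \<Longrightarrow> polyhedral k (polyhedron k H)"
  unfolding polyhedral_def polyhedron_def by blast

lemma polyhedron_shrink_constraints:
  "polyhedron k (shrink_constraints k n H) = (\<Inter>(v, m) \<in> set H. halfspace k v (m + box_spread k n v))"
  by (auto simp: polyhedron_def shrink_constraints_def)

lemma polyhedron_shrink_subset: "polyhedron k (shrink_constraints k n H) \<subseteq> polyhedron k H"
  unfolding polyhedron_shrink_constraints unfolding polyhedron_def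
  by (rule INF_mono') (simp add: halfspace_antimono box_spread_nonneg split: prod.split)

lemma measure_zero_polyhedron_diff_shrink:
  assumes "\<forall>(v, m) \<in> set H. length v = k"
  shows "measure_zero k (polyhedron k H - polyhedron k (shrink_constraints k n H))"
proof (rule measure_zero_subset[OF measure_zero_UN_list])
  show "polyhedron k H - polyhedron k (shrink_constraints k n H)
          \<subseteq> (\<Union>(v, m) \<in> set H. halfspace k v m - halfspace k v (m + box_spread k n v))"
    unfolding polyhedron_shrink_constraints unfolding polyhedron_def by blast
qed (use assms measure_zero_halfspace_strip in auto)

lemma box_subset_polyhedron:
  assumes "z \<in> polyhedron k (shrink_constraints k n H)"
  shows "box k n z \<subseteq> polyhedron k H"
proof -
  have "box k n z \<subseteq> halfspace k v m" if "(v, m) \<in> set H" for v m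
  proof (rule box_subset_halfspace)
    show "dotp k v z > m + box_spread k n v"
      using assms that unfolding polyhedron_shrink_constraints halfspace_def by blast
  qed
  then show ?thesis
    unfolding polyhedron_def by blast
qed

lemma polyhedron_subset_lattice: "H \<noteq> [] \<Longrightarrow> polyhedron k H \<subseteq> lattice k"
  by (cases H) (auto simp: polyhedron_def halfspace_def)

lemma mem_box_self: "z \<in> lattice k \<Longrightarrow> z \<in> box k n z"
  by (simp add: box_def)

theorem mainTheorem19:
  fixes k n :: nat and R :: "int list set"
  assumes "polyhedral k R" and "n > 0"
  shows "\<exists>S R'. measure_zero k S \<and> polyhedral k R' \<and> R = S \<union> R' \<and>
           (\<forall>z \<in> R'. \<exists>c. length c = k \<and> z \<in> box k n c \<and> box k n c \<subseteq> R)"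
proof (cases "R = lattice k")
  case True
  show ?thesis
    by (rule exI[of _ "{}"], rule exI[of _ R])
      (use True in \<open>auto simp: polyhedral_def box_def lattice_def\<close>)
next
  case False
  then obtain H where H: "H \<noteq> []" "\<forall>(v, m) \<in> set H. length v = k" "R = polyhedron k H"
    using assms(1) by (auto simp: polyhedral_def polyhedron_def)
  define R' where "R' = polyhedron k (shrink_constraints k n H)"
  have "polyhedral k R'"
    unfolding R'_def using H(1,2) by (intro polyhedral_polyhedron) (auto simp: shrink_constraints_def)
  moreover have "R = (R - R') \<union> R'"
    using polyhedron_shrink_subset unfolding R'_def H(3) by blast
  moreover have "measure_zero k (R - R')"
    unfolding R'_def H(3) using H(2) by (rule measure_zero_polyhedron_diff_shrink)
  moreover have "length z = k \<and> z \<in> box k n z \<and> box k n z \<subseteq> R" if "z \<in> R'" for z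
  proof -
    have "z \<in> lattice k"
      using that polyhedron_shrink_subset polyhedron_subset_lattice[OF H(1)] unfolding R'_def by blast
    then show ?thesis
      using box_subset_polyhedron that unfolding R'_def H(3) by (simp add: mem_box_self lattice_def)
  qed
  ultimately show ?thesis
    by blast
qed

end
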